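(* Let $p\in\mathbb{R}^n$, let $u_p\in\mathcal W\cap L^{\frac{n}{n-2s_1}}(Q)$ be a minimizer of $\mathcal E_p$ over $\mathcal W$ with $\mathcal E_p(u_p)<\infty$, and let $z:\mathbb{R}^n\times\mathbb{R}^n\to[-1,1]$ be a measurable function satisfying: (a) $\iint_{Q\times\mathbb{R}^n}\tfrac12 z(x,y)(\eta(x)-\eta(y))K(x,y)\,dx\,dy+\int_Q g\eta=0$ for every $\mathbb{Z}^n$-periodic $\eta\in C^\infty(\mathbb{R}^n)$; (b) $u_p(x)-u_p(y)+p\cdot(x-y)=z(x,y)|u_p(x)-u_p(y)+p\cdot(x-y)|$ a.e.; (c) $z(x,y)=-z(y,x)$ a.e.; (d) $z(x+k,y+k)=z(x,y)$ for all $k\in\mathbb{Z}^n$, a.e. (such $z$ exists). Then for every $\eta\in C^\infty_c(\mathbb{R}^n)$, $$\iint_{\mathbb{R}^n\times\mathbb{R}^n}\tfrac12 z(x,y)(\eta(x)-\eta(y))K(x,y)\,dx\,dy+\int_{\mathbb{R}^n}g(x)\eta(x)\,dx=0.$$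
   Context: Standing assumptions: $n\ge2$, $Q=(0,1)^n$. The kernel $K:\mathbb{R}^n\times\mathbb{R}^n\to[0,\infty)$ is measurable and satisfies: (K1) $K(y,x)=K(x,y)=K(x+w,y+w)=K(Rx,Ry)$ for all $x,y,w\in\mathbb{R}^n$ and all $R\in SO(n)$; (K2) $\int_{\mathbb{R}^n}|h|\,K(h,0)\,dh<\infty$; (K3) there are constants $0<s_1<\tfrac12<s_2<1$, $\delta>0$ and $0<\kappa_1\le\kappa_2$ such that $\kappa_1\,\chi_{(0,\delta)}(|x-y|)\,|x-y|^{-n-2s_1}\le K(x,y)\le\kappa_2\min\{|x-y|^{-n-2s_1},|x-y|^{-n-2s_2}\}$ for all $x\neq y$; (K4) $\inf_{(x,y)\in Q\times Q}K(x,y)\ge\kappa_3$ for some constant $\kappa_3>0$. The forcing term $g\in L^\infty(\mathbb{R}^n)$ is $\mathbb{Z}^n$-periodic with $\int_Q g(x)\,dx=0$. Cell problem: $\mathcal W=\{u\in L^1_{\rm loc}(\mathbb{R}^n):\ u \text{ is } \mathbb{Z}^n\text{-periodic},\ \int_Q u=0\}$, and for $p\in\mathbb{R}^n$, $\mathcal E_p(u)=\iint_{Q\times\mathbb{R}^n}\tfrac12|u(x)-u(y)+p\cdot(x-y)|\,K(x,y)\,dx\,dy+\int_Q g(x)u(x)\,dx$. *)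

theory Defs
  imports "HOL-Analysis.Analysis"
begin

definition cubeQ :: "(real^'n) set" where
  "cubeQ = {x. \<forall>i. 0 < x$i \<and> x$i < 1}"

definition intvecs :: "(real^'n) set" where
  "intvecs = {k. \<forall>i. k$i \<in> \<int>}"

abbreviation M2 :: "((real^'n) \<times> (real^'n)) measure" where
  "M2 \<equiv> lborel \<Otimes>\<^sub>M lborel"

text \<open>C-infinity functions R^n -> R: differentiable everywhere with all partial
  derivatives again C-infinity (greatest fixed point = derivatives of all orders).\<close>
coinductive smooth_fun :: "(real^'n \<Rightarrow> real) \<Rightarrow> bool" where
  "(\<forall>x. f differentiable (at x)) \<Longrightarrow>
   (\<forall>i\<in>(Basis :: (real^'n) set). smooth_fun (\<lambda>x. frechet_derivative f (at x) i)) \<Longrightarrow>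
   smooth_fun f"

definition periodic_ae :: "(real^'n \<Rightarrow> real) \<Rightarrow> bool" where
  "periodic_ae u \<longleftrightarrow> (\<forall>k\<in>intvecs. AE x in lborel. u (x + k) = u x)"

definition cellW :: "(real^'n \<Rightarrow> real) set" where
  "cellW = {u. u \<in> borel_measurable lborel \<and>
               (\<forall>C. compact C \<longrightarrow> set_integrable lborel C u) \<and>
               periodic_ae u \<and> (LINT x:cubeQ|lborel. u x) = 0}"

definition energy :: "(real^'n \<Rightarrow> real^'n \<Rightarrow> real) \<Rightarrow> (real^'n \<Rightarrow> real) \<Rightarrow> real^'n
     \<Rightarrow> (real^'n \<Rightarrow> real) \<Rightarrow> ereal" where
  "energy K g p u =
     enn2ereal (\<integral>\<^sup>+ w. ennreal (1/2 * \<bar>u (fst w) - u (snd w) + p \<bullet> (fst w - snd w)\<bar>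
                    * K (fst w) (snd w)) * indicator (cubeQ \<times> UNIV) w \<partial>M2)
     + ereal (LINT x:cubeQ|lborel. g x * u x)"

end

theory Submission
  imports Defs
begin

text \<open>The periodization \<open>\<eta>\<^sup>#(x) = \<Sum>\<^sub>k \<eta>(x + k)\<close>, \<open>k \<in> \<int>\<^sup>n\<close>, is locally a finite sum,
  hence a smooth \<open>\<int>\<^sup>n\<close>-periodic function, so the cell identity (a) applies to it. It
  remains to see that the two integrals against \<open>\<eta>\<close> equal the cell integrals against
  \<open>\<eta>\<^sup>#\<close>: cut \<open>\<real>\<^sup>n\<close> (in the first variable) into the cubes \<open>Q + k\<close> and translate each
  piece back to \<open>Q\<close>, using translation invariance of Lebesgue measure and of \<open>K\<close> and the
  periodicity of \<open>z\<close> and \<open>g\<close>. Summation and integration may be interchanged because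
  \<open>|\<eta>(x) - \<eta>(y)| K(x,y) \<le> C |x - y| K(x,y)\<close>, which is integrable wherever \<open>x\<close> or \<open>y\<close>
  lies in the support of \<open>\<eta>\<close>, by (K2).\<close>

subsection \<open>The integer lattice\<close>

lemma intvecs_eq_range: "intvecs = range (\<lambda>m::'a \<Rightarrow> int. (\<chi> i. of_int (m i)) :: real^'a)"
proof -
  have "k \<in> range (\<lambda>m::'a \<Rightarrow> int. (\<chi> i. of_int (m i)) :: real^'a)" if "k \<in> intvecs" for k
  proof -
    have "\<forall>i. \<exists>m. k $ i = of_int m" using that by (auto simp: intvecs_def elim!: Ints_cases)
    then obtain m where "\<And>i. k $ i = of_int (m i)" by metis
    then show ?thesis by (auto simp: vec_eq_iff)
  qed
  then show ?thesis by (auto simp: intvecs_def)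
qed

lemma countable_intvecs: "countable intvecs"
  unfolding intvecs_eq_range by simp

lemma infinite_intvecs: "infinite (intvecs :: (real^'a) set)"
proof
  assume "finite (intvecs :: (real^'a) set)"
  moreover have "inj (\<lambda>m::nat. (\<chi> i. real m) :: real^'a)"
    by (auto simp: inj_on_def vec_eq_iff)
  moreover have "range (\<lambda>m::nat. (\<chi> i. real m) :: real^'a) \<subseteq> intvecs"
    by (auto simp: intvecs_def)
  ultimately show False
    by (meson finite_imageD finite_subset infinite_UNIV_char_0)
qed

lemma intvecs_add: "a \<in> intvecs \<Longrightarrow> b \<in> intvecs \<Longrightarrow> a + b \<in> intvecs"
  and intvecs_diff: "a \<in> intvecs \<Longrightarrow> b \<in> intvecs \<Longrightarrow> a - b \<in> intvecs"
  by (auto simp: intvecs_def)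

lemma finite_intvecs_Int_bounded:
  assumes "bounded S"
  shows "finite (intvecs \<inter> (S :: (real^'a) set))"
proof -
  obtain R where R: "\<And>x. x \<in> S \<Longrightarrow> norm x \<le> R" using assms bounded_iff by blast
  let ?c = "\<lceil>R\<rceil>"
  have "intvecs \<inter> S \<subseteq> (\<lambda>m. \<chi> i. of_int (m i)) ` (UNIV \<rightarrow>\<^sub>E {-?c..?c})"
  proof
    fix k assume k: "k \<in> intvecs \<inter> S"
    then obtain m where m: "k = (\<chi> i. of_int (m i))" by (auto simp: intvecs_eq_range)
    have "of_int \<bar>m i\<bar> \<le> R" for i
      using R[of k] k component_le_norm_cart[of k i] by (simp add: m)
    then have "\<bar>m i\<bar> \<le> ?c" for i
      by (metis ceiling_mono ceiling_of_int)
    then have "m \<in> UNIV \<rightarrow>\<^sub>E {-?c..?c}"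
      by (auto simp: abs_le_iff minus_le_iff)
    then show "k \<in> (\<lambda>m. \<chi> i. of_int (m i)) ` (UNIV \<rightarrow>\<^sub>E {-?c..?c})" using m by blast
  qed
  then show ?thesis by (rule finite_subset) (simp add: finite_PiE)
qed

lemma finite_lattice_points_near_bounded:
  assumes "bounded S"
  shows "finite {k \<in> intvecs. \<exists>s\<in>S. dist (x + k) s < r}"
proof -
  obtain R where R: "\<And>s. s \<in> S \<Longrightarrow> norm s \<le> R" using assms bounded_iff by blast
  have "norm k \<le> r + R + norm x" if "s \<in> S" "dist (x + k) s < r" for k s
    using norm_triangle_ineq4[of "x + k - s + s" x] norm_triangle_ineq[of "x + k - s" s]
      R[OF that(1)] that(2) by (simp add: dist_norm)
  then have "{k \<in> intvecs. \<exists>s\<in>S. dist (x + k) s < r} \<subseteq> intvecs \<inter> cball 0 (r + R + norm x)"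
    by auto
  then show ?thesis using finite_intvecs_Int_bounded[OF bounded_cball] by (rule finite_subset)
qed

definition lattice_enum :: "nat \<Rightarrow> real^'a" where
  "lattice_enum = from_nat_into intvecs"

lemma bij_betw_lattice_enum: "bij_betw lattice_enum UNIV intvecs"
  unfolding lattice_enum_def by (rule bij_betw_from_nat_into[OF countable_intvecs infinite_intvecs])

lemma lattice_enum_in_intvecs: "lattice_enum i \<in> intvecs"
  using bij_betw_lattice_enum by (auto simp: bij_betw_def)

lemma has_sum_lattice_imp_sums:
  "(f has_sum S) intvecs \<Longrightarrow> (\<lambda>i. f (lattice_enum i)) sums S"
  by (rule has_sum_imp_sums) (simp add: has_sum_reindex_bij_betw[OF bij_betw_lattice_enum])

subsection \<open>Smooth functions\<close>

lemma frechet_derivative_outside_support: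
  fixes f :: "'a::real_normed_vector \<Rightarrow> 'b::real_normed_vector"
  assumes "x \<notin> closure {x. f x \<noteq> 0}"
  shows "frechet_derivative f (at x) = (\<lambda>_. 0)"
proof -
  have "(f has_derivative (\<lambda>_. 0)) (at x)"
  proof (rule has_derivative_transform_within_open[where s="- closure {x. f x \<noteq> 0}"])
    show "((\<lambda>_. 0) has_derivative (\<lambda>_. 0)) (at x)" by simp
  qed (use assms closure_subset in \<open>force simp: open_Compl\<close>)+
  then show ?thesis by (rule frechet_derivative_at[symmetric])
qed

lemma support_frechet_derivative_subset:
  fixes f :: "'a::real_normed_vector \<Rightarrow> 'b::real_normed_vector"
  shows "{x. frechet_derivative f (at x) h \<noteq> 0} \<subseteq> closure {x. f x \<noteq> 0}"
  using frechet_derivative_outside_support by fastforce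

lemma smooth_fun_differentiable: "smooth_fun f \<Longrightarrow> f differentiable (at x)"
  by (erule smooth_fun.cases) auto

lemma smooth_fun_partial_derivative:
  "smooth_fun f \<Longrightarrow> i \<in> Basis \<Longrightarrow> smooth_fun (\<lambda>x. frechet_derivative f (at x) i)"
  by (erule smooth_fun.cases) auto

lemma smooth_fun_continuous: "smooth_fun f \<Longrightarrow> continuous_on UNIV f"
  by (metis continuous_at_imp_continuous_on differentiable_imp_continuous_within smooth_fun_differentiable)

lemma borel_measurable_smooth_fun: "smooth_fun f \<Longrightarrow> f \<in> borel_measurable borel"
  by (rule borel_measurable_continuous_onI) (rule smooth_fun_continuous)

lemma integrable_continuous_bounded_support:
  fixes f :: "'a::euclidean_space \<Rightarrow> real"
  assumes cont: "continuous_on UNIV f" and bdd: "bounded {x. f x \<noteq> 0}"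
  shows "integrable lborel f"
proof -
  let ?S = "closure {x. f x \<noteq> 0}"
  have "integrable lborel (\<lambda>x. indicator ?S x *\<^sub>R f x)"
    using bdd by (intro borel_integrable_compact continuous_on_subset[OF cont]) simp_all
  moreover have "(\<lambda>x. indicator ?S x *\<^sub>R f x) = f"
  proof
    fix x show "indicator ?S x *\<^sub>R f x = f x"
      using closure_subset[of "{x. f x \<noteq> 0}"] by (cases "x \<in> ?S") auto
  qed
  ultimately show ?thesis by simp
qed

lemma smooth_fun_lipschitz:
  fixes f :: "real^'a \<Rightarrow> real"
  assumes sm: "smooth_fun f" and bdd: "bounded {x. f x \<noteq> 0}"
  obtains C where "C \<ge> 0" "\<And>x y. \<bar>f x - f y\<bar> \<le> C * dist x y"
proof -
  let ?S = "closure {x. f x \<noteq> 0}"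
  have "bounded (range (\<lambda>x. frechet_derivative f (at x) i))" if i: "i \<in> Basis" for i
  proof -
    let ?D = "\<lambda>x. frechet_derivative f (at x) i"
    have cpt: "compact (?D ` ?S)"
      using smooth_fun_continuous[OF smooth_fun_partial_derivative[OF sm i]]
      by (intro compact_continuous_image) (auto simp: bdd intro: continuous_on_subset)
    have "?D x \<in> insert 0 (?D ` ?S)" for x
      using frechet_derivative_outside_support[of x f] by (cases "x \<in> ?S") auto
    then have "range ?D \<subseteq> insert 0 (?D ` ?S)" by blast
    moreover have "bounded (insert 0 (?D ` ?S))"
      using compact_imp_bounded[OF cpt] by (simp only: bounded_insert)
    ultimately show ?thesis by (rule bounded_subset[rotated])
  qed
  then have "bounded (\<Union>i\<in>Basis. range (\<lambda>x. frechet_derivative f (at x) i))"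
    by (simp add: bounded_UN)
  then obtain B where "B > 0" "\<forall>v \<in> (\<Union>i\<in>Basis. range (\<lambda>x. frechet_derivative f (at x) i)). norm v \<le> B"
    unfolding bounded_pos by blast
  then have B: "B > 0" "\<And>i x. i \<in> Basis \<Longrightarrow> \<bar>frechet_derivative f (at x) i\<bar> \<le> B"
    by auto
  have deriv: "(f has_derivative frechet_derivative f (at x)) (at x)" for x
    using smooth_fun_differentiable[OF sm] frechet_derivative_works by blast
  have onorm: "onorm (frechet_derivative f (at x)) \<le> real DIM(real^'a) * B" for x
  proof -
    have "onorm (frechet_derivative f (at x)) \<le> (\<Sum>i\<in>Basis. norm (frechet_derivative f (at x) i))"
      using deriv[of x] by (intro onorm_componentwise) (rule has_derivative_bounded_linear)
    also have "\<dots> \<le> real DIM(real^'a) * B"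
      using sum_bounded_above[of Basis "\<lambda>i. norm (frechet_derivative f (at x) i)" B] B(2) by simp
    finally show ?thesis .
  qed
  have "norm (f x - f y) \<le> real DIM(real^'a) * B * norm (x - y)" for x y
    by (rule differentiable_bound[of UNIV]) (use deriv onorm in auto)
  then show ?thesis using B(1) by (intro that[of "real DIM(real^'a) * B"]) (simp_all add: dist_norm)
qed

subsection \<open>Periodization\<close>

definition periodize :: "(real^'a \<Rightarrow> real) \<Rightarrow> real^'a \<Rightarrow> real" where
  "periodize f x = (\<Sum>\<^sub>\<infinity>k\<in>intvecs. f (x + k))"

lemma periodize_eq_sum:
  assumes "finite N" "N \<subseteq> intvecs" "{k \<in> intvecs. f (x + k) \<noteq> 0} \<subseteq> N"
  shows "periodize f x = (\<Sum>k\<in>N. f (x + k))"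
proof -
  have "periodize f x = (\<Sum>\<^sub>\<infinity>k\<in>N. f (x + k))"
    unfolding periodize_def using assms(2,3) by (intro infsum_cong_neutral) auto
  then show ?thesis using assms(1) by simp
qed

lemma has_sum_periodize:
  assumes "bounded {x. f x \<noteq> 0}"
  shows "((\<lambda>k. f (x + k)) has_sum periodize f x) intvecs"
proof -
  let ?N = "{k \<in> intvecs. \<exists>s\<in>{x. f x \<noteq> 0}. dist (x + k) s < 1}"
  have N: "finite ?N" "{k \<in> intvecs. f (x + k) \<noteq> 0} \<subseteq> ?N"
    using finite_lattice_points_near_bounded[OF assms] by auto
  show ?thesis
    by (rule has_sum_finite_neutralI[OF N(1)]) (use N in \<open>auto intro: periodize_eq_sum\<close>)
qed

lemma periodize_add_lattice:
  assumes "k \<in> intvecs"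
  shows "periodize f (x + k) = periodize f x"
proof -
  have "bij_betw ((+) k) intvecs intvecs"
    by (rule bij_betw_byWitness[where f'="\<lambda>l. l - k"]) (use assms in \<open>auto simp: intvecs_add intvecs_diff\<close>)
  have "periodize f (x + k) = (\<Sum>\<^sub>\<infinity>l\<in>intvecs. f (x + (k + l)))"
    by (simp add: periodize_def add.assoc)
  also have "\<dots> = periodize f x"
    unfolding periodize_def by (rule infsum_reindex_bij_betw) fact
  finally show ?thesis .
qed

lemma has_derivative_periodize:
  fixes f :: "real^'a \<Rightarrow> real"
  assumes diff: "\<And>x. f differentiable (at x)" and bdd: "bounded {x. f x \<noteq> 0}"
  shows "(periodize f has_derivative (\<lambda>h. periodize (\<lambda>y. frechet_derivative f (at y) h) x)) (at x)"
proof -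
  define N where "N = {k \<in> intvecs. \<exists>s\<in>closure {x. f x \<noteq> 0}. dist (x + k) s < 1}"
  have N: "finite N" "N \<subseteq> intvecs"
    using finite_lattice_points_near_bounded[OF bounded_closure[OF bdd]] by (auto simp: N_def)
  have near: "{k \<in> intvecs. f (y + k) \<noteq> 0} \<subseteq> N" if "dist y x < 1" for y
  proof safe
    fix k assume "k \<in> intvecs" "f (y + k) \<noteq> 0"
    moreover have "y + k \<in> closure {x. f x \<noteq> 0}"
      using \<open>f (y + k) \<noteq> 0\<close> closure_subset[of "{x. f x \<noteq> 0}"] by blast
    moreover have "dist (x + k) (y + k) < 1" using that by (metis dist_add_cancel2 dist_commute)
    ultimately show "k \<in> N" unfolding N_def by blast
  qed
  have shifted: "((\<lambda>y. f (y + k)) has_derivative frechet_derivative f (at (x + k))) (at x)" for k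
  proof -
    have "(f has_derivative frechet_derivative f (at (x + k))) (at (x + k))"
      using diff frechet_derivative_works by blast
    moreover have "((\<lambda>y. y + k) has_derivative (\<lambda>h. h)) (at x)"
      by (auto intro!: derivative_eq_intros)
    ultimately show ?thesis
      using has_derivative_compose[of "\<lambda>y. y + k" "\<lambda>h. h" x UNIV f] by (simp add: o_def)
  qed
  have "((\<lambda>y. \<Sum>k\<in>N. f (y + k)) has_derivative (\<lambda>h. \<Sum>k\<in>N. frechet_derivative f (at (x + k)) h)) (at x)"
    by (rule has_derivative_sum) (rule shifted)
  then have "(periodize f has_derivative (\<lambda>h. \<Sum>k\<in>N. frechet_derivative f (at (x + k)) h)) (at x)"
    by (rule has_derivative_transform_within_open[where s="ball x 1"])
      (auto simp: dist_commute intro!: periodize_eq_sum[OF N near, symmetric])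
  moreover have "(\<Sum>k\<in>N. frechet_derivative f (at (x + k)) h) = periodize (\<lambda>y. frechet_derivative f (at y) h) x" for h
  proof (intro periodize_eq_sum[OF N, symmetric] subsetI)
    fix k assume "k \<in> {k \<in> intvecs. frechet_derivative f (at (x + k)) h \<noteq> 0}"
    then have "k \<in> intvecs" "x + k \<in> closure {x. f x \<noteq> 0}"
      using support_frechet_derivative_subset[of f h] by auto
    then show "k \<in> N" unfolding N_def by (intro CollectI conjI bexI[of _ "x + k"]) auto
  qed
  ultimately show ?thesis by simp
qed

lemma smooth_fun_periodize:
  fixes f :: "real^'a \<Rightarrow> real"
  assumes "smooth_fun f" "bounded {x. f x \<noteq> 0}"
  shows "smooth_fun (periodize f)"
proof -
  define X where "X g \<longleftrightarrow> (\<exists>f. g = periodize f \<and> smooth_fun f \<and> bounded {x::real^'a. f x \<noteq> 0})" for g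
  have "X (periodize f)" using assms unfolding X_def by blast
  then show ?thesis
  proof (rule smooth_fun.coinduct[of X])
    fix g assume "X g"
    then obtain f where g: "g = periodize f" and sm: "smooth_fun f" and bdd: "bounded {x. f x \<noteq> 0}"
      unfolding X_def by blast
    note deriv = has_derivative_periodize[OF smooth_fun_differentiable[OF sm] bdd]
    have deriv_g: "frechet_derivative g (at x) = (\<lambda>h. periodize (\<lambda>y. frechet_derivative f (at y) h) x)" for x
      unfolding g by (rule frechet_derivative_at[OF deriv, symmetric])
    have "bounded {x. frechet_derivative f (at x) i \<noteq> 0}" for i
      by (rule bounded_subset[OF bounded_closure[OF bdd] support_frechet_derivative_subset])
    then have "X (\<lambda>x. frechet_derivative g (at x) i)" if "i \<in> Basis" for i
      unfolding X_def deriv_g using smooth_fun_partial_derivative[OF sm that] by blast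
    then show "\<exists>f. g = f \<and> (\<forall>x. f differentiable at x) \<and>
        (\<forall>i\<in>Basis. X (\<lambda>x. frechet_derivative f (at x) i) \<or> smooth_fun (\<lambda>x. frechet_derivative f (at x) i))"
      using deriv g unfolding differentiable_def by blast
  qed
qed

subsection \<open>Unfolding integrals onto the unit cube\<close>

lemma AE_lborel_off_lattice_hyperplanes: "AE x in lborel. \<forall>j. (x::real^'a) $ j \<notin> \<int>"
proof -
  let ?G = "\<Union>(j, m) \<in> UNIV \<times> \<int>. {x::real^'a. x $ j = m}"
  have "countable (UNIV \<times> (\<int> :: real set) :: ('a \<times> real) set)"
    by (simp add: Ints_def)
  moreover have "negligible {x::real^'a. x $ j = m}" for j m
  proof -
    have "axis j (1::real) \<in> Basis" by (simp add: axis_in_Basis_iff)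
    from negligible_standard_hyperplane[OF this, of m] show ?thesis by (simp add: cart_eq_inner_axis)
  qed
  ultimately have "negligible ?G" by (intro negligible_countable_Union) auto
  then have "AE x in lebesgue. x \<notin> ?G"
    by (intro AE_not_in) (simp add: negligible_iff_null_sets)
  then show ?thesis by (simp add: AE_completion_iff)
qed

lemma cubeQ_eq_box: "cubeQ = box 0 (1::real^'a)"
  by (auto simp: cubeQ_def mem_box_cart)

lemma sets_borel_cubeQ [measurable]: "cubeQ \<in> sets borel"
  unfolding cubeQ_eq_box by simp

lemma ex1_lattice_cell:
  fixes x :: "real^'a"
  assumes "\<forall>j. x $ j \<notin> \<int>"
  shows "\<exists>!k. k \<in> intvecs \<and> x - k \<in> cubeQ"
proof (rule ex1I[where a="\<chi> j. of_int \<lfloor>x $ j\<rfloor>"])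
  let ?k = "\<chi> j. of_int \<lfloor>x $ j\<rfloor> :: real^'a"
  have "of_int \<lfloor>x $ j\<rfloor> \<noteq> x $ j" for j using assms by (metis Ints_of_int)
  then have "of_int \<lfloor>x $ j\<rfloor> < x $ j" for j by (metis of_int_floor_le order_le_neq_trans)
  then show "?k \<in> intvecs \<and> x - ?k \<in> cubeQ"
    by (auto simp: intvecs_def cubeQ_def) linarith
next
  fix k assume k: "k \<in> intvecs \<and> x - k \<in> cubeQ"
  show "k = (\<chi> j. of_int \<lfloor>x $ j\<rfloor>)"
  proof (rule vec_eq_iff[THEN iffD2, rule_format])
    fix j
    obtain m where m: "k $ j = of_int m" using k by (auto simp: intvecs_def elim: Ints_cases)
    moreover have "k $ j < x $ j" "x $ j - k $ j < 1" using k by (auto simp: cubeQ_def)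
    ultimately have "of_int m < x $ j" "x $ j < of_int m + 1" by auto
    then have "\<lfloor>x $ j\<rfloor> = m" by linarith
    then show "k $ j = (\<chi> j. of_int \<lfloor>x $ j\<rfloor>) $ j" by (simp add: m)
  qed
qed

lemma indicator_cubeQ_lattice_enum:
  fixes x :: "real^'a"
  assumes "\<forall>j. x $ j \<notin> \<int>"
  obtains i0 where "\<And>i. indicator cubeQ (x - lattice_enum i) = (if i = i0 then 1 else 0 :: real)"
proof -
  obtain k where k: "k \<in> intvecs" "x - k \<in> cubeQ"
    and unique: "\<And>l. l \<in> intvecs \<Longrightarrow> x - l \<in> cubeQ \<Longrightarrow> l = k"
    using ex1_lattice_cell[OF assms] by blast
  obtain i0 where i0: "lattice_enum i0 = k"
    using bij_betw_lattice_enum k(1) by (metis bij_betw_imp_surj_on rangeE)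
  have "x - lattice_enum i \<in> cubeQ \<longleftrightarrow> i = i0" for i
    using unique k(2) i0 lattice_enum_in_intvecs bij_betw_imp_inj_on[OF bij_betw_lattice_enum]
    by (auto simp: inj_def)
  then show ?thesis by (intro that[of i0]) (simp add: indicator_def)
qed

text \<open>A measure-preserving action \<open>\<sigma>\<close> of the lattice on \<open>M\<close> with an equivariant map \<open>\<pi>\<close>
  to \<open>\<real>\<^sup>n\<close>; the instances used are Lebesgue measure with \<open>\<pi> = id\<close> and the product measure
  with the diagonal action and \<open>\<pi> = fst\<close>.\<close>

locale lattice_action =
  fixes M :: "'b measure" and \<pi> :: "'b \<Rightarrow> real^'a" and \<sigma> :: "real^'a \<Rightarrow> 'b \<Rightarrow> 'b"
  assumes measurable_\<pi> [measurable]: "\<pi> \<in> M \<rightarrow>\<^sub>M borel"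
    and AE_off_lattice_hyperplanes: "AE w in M. \<forall>j. \<pi> w $ j \<notin> \<int>"
    and measurable_\<sigma>: "k \<in> intvecs \<Longrightarrow> \<sigma> k \<in> M \<rightarrow>\<^sub>M M"
    and distr_\<sigma>: "k \<in> intvecs \<Longrightarrow> distr M M (\<sigma> k) = M"
    and \<pi>_\<sigma>: "k \<in> intvecs \<Longrightarrow> \<pi> (\<sigma> k w) = \<pi> w + k"
begin

lemma sums_integral_cells:
  fixes h :: "'b \<Rightarrow> real"
  assumes h: "integrable M h"
  shows "(\<lambda>i. \<integral>w. indicator cubeQ (\<pi> w - lattice_enum i) * h w \<partial>M) sums integral\<^sup>L M h"
proof -
  define s where "s n w = (\<Sum>i<n. indicator cubeQ (\<pi> w - lattice_enum i) * h w)" for n w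
  have [measurable]: "h \<in> borel_measurable M" using h by simp
  have integrable_cell: "integrable M (\<lambda>w. indicator cubeQ (\<pi> w - lattice_enum i) * h w)" for i
    by (rule Bochner_Integration.integrable_bound[OF h]) (auto simp: indicator_def)
  have single: "AE w in M. \<exists>i0. \<forall>n. s n w = (if i0 < n then h w else 0)"
    using AE_off_lattice_hyperplanes
  proof eventually_elim
    case (elim w)
    then obtain i0 where ind: "\<And>i. indicator cubeQ (\<pi> w - lattice_enum i) = (if i = i0 then 1 else 0 :: real)"
      using indicator_cubeQ_lattice_enum[OF elim] by blast
    have "s n w = (\<Sum>i<n. if i = i0 then h w else 0)" for n
      unfolding s_def by (intro sum.cong) (simp_all add: ind)
    then show ?case by (intro exI[of _ i0]) simp
  qed
  then have lim: "AE w in M. (\<lambda>n. s n w) \<longlonglongrightarrow> h w"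
  proof eventually_elim
    case (elim w)
    then obtain i0 where "\<And>n. s n w = (if i0 < n then h w else 0)" by blast
    then have "\<forall>\<^sub>F n in sequentially. s n w = h w" by (intro eventually_sequentiallyI[of "Suc i0"]) simp
    then show ?case by (rule tendsto_eventually)
  qed
  from single have bound: "AE w in M. norm (s n w) \<le> norm (h w)" for n
    by eventually_elim auto
  have "(\<lambda>n. integral\<^sup>L M (s n)) \<longlonglongrightarrow> integral\<^sup>L M h"
    by (rule integral_dominated_convergence[OF _ _ _ lim bound]) (use h in \<open>auto simp: s_def\<close>)
  moreover have "integral\<^sup>L M (s n) = (\<Sum>i<n. \<integral>w. indicator cubeQ (\<pi> w - lattice_enum i) * h w \<partial>M)" for n
    unfolding s_def by (rule Bochner_Integration.integral_sum) (rule integrable_cell)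
  ultimately show ?thesis by (simp add: sums_def)
qed

lemma integral_cell_translate:
  fixes G :: "'b \<Rightarrow> real"
  assumes k: "k \<in> intvecs" and G: "integrable M G"
  shows "integrable M (\<lambda>w. indicator cubeQ (\<pi> w) * G (\<sigma> k w))"
    and "(\<integral>w. indicator cubeQ (\<pi> w) * G (\<sigma> k w) \<partial>M) = (\<integral>w. indicator cubeQ (\<pi> w - k) * G w \<partial>M)"
proof -
  let ?G = "\<lambda>w. indicator cubeQ (\<pi> w - k) * G w"
  have [measurable]: "G \<in> borel_measurable M" using G by simp
  have "integrable M ?G"
    by (rule Bochner_Integration.integrable_bound[OF G]) (auto simp: indicator_def)
  moreover have G_meas: "?G \<in> borel_measurable M" by measurable
  ultimately have "integrable M (\<lambda>w. ?G (\<sigma> k w))"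
    using integrable_distr_eq[OF measurable_\<sigma>[OF k] G_meas] by (simp add: distr_\<sigma>[OF k])
  moreover have "integral\<^sup>L M ?G = (\<integral>w. ?G (\<sigma> k w) \<partial>M)"
    using integral_distr[OF measurable_\<sigma>[OF k] G_meas] by (simp add: distr_\<sigma>[OF k])
  moreover have "?G (\<sigma> k w) = indicator cubeQ (\<pi> w) * G (\<sigma> k w)" for w
    by (simp add: \<pi>_\<sigma>[OF k])
  ultimately show "integrable M (\<lambda>w. indicator cubeQ (\<pi> w) * G (\<sigma> k w))"
    and "(\<integral>w. indicator cubeQ (\<pi> w) * G (\<sigma> k w) \<partial>M) = integral\<^sup>L M ?G"
    by simp_all
qed

lemma integral_unfold_cubeQ:
  fixes F H :: "'b \<Rightarrow> real"
  assumes F: "integrable M F" and H [measurable]: "H \<in> borel_measurable M"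
    and has_sum: "AE w in M. \<pi> w \<in> cubeQ \<longrightarrow> ((\<lambda>k. F (\<sigma> k w)) has_sum H w) intvecs"
  shows "integral\<^sup>L M F = (\<integral>w. indicator cubeQ (\<pi> w) * H w \<partial>M)"
proof -
  define f where "f i w = indicator cubeQ (\<pi> w) * F (\<sigma> (lattice_enum i) w)" for i w
  have F_abs: "integrable M (\<lambda>w. \<bar>F w\<bar>)" using F by simp
  have f_int: "integrable M (f i)" for i
    unfolding f_def by (rule integral_cell_translate(1)[OF lattice_enum_in_intvecs F])
  have sums_F: "(\<lambda>i. integral\<^sup>L M (f i)) sums integral\<^sup>L M F"
    using sums_integral_cells[OF F] unfolding f_def integral_cell_translate(2)[OF lattice_enum_in_intvecs F] .
  have sums_norm: "(\<lambda>i. \<integral>w. norm (f i w) \<partial>M) sums (\<integral>w. \<bar>F w\<bar> \<partial>M)"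
    using sums_integral_cells[OF F_abs]
    unfolding f_def integral_cell_translate(2)[OF lattice_enum_in_intvecs F_abs, symmetric]
    by (simp add: abs_mult)
  have pointwise: "AE w in M. (\<lambda>i. f i w) sums (indicator cubeQ (\<pi> w) * H w) \<and> summable (\<lambda>i. norm (f i w))"
    using has_sum
  proof eventually_elim
    case (elim w)
    show ?case
    proof (cases "\<pi> w \<in> cubeQ")
      case True
      then have sum: "((\<lambda>k. F (\<sigma> k w)) has_sum H w) intvecs" using elim by blast
      have "(\<lambda>k. norm (F (\<sigma> k w))) summable_on intvecs"
        using summable_on_iff_abs_summable_on_real[THEN iffD1, OF has_sum_imp_summable[OF sum]] .
      then have "summable (\<lambda>i. norm (F (\<sigma> (lattice_enum i) w)))"
        by (rule sums_summable[OF has_sum_lattice_imp_sums[OF has_sum_infsum]])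
      then show ?thesis using True has_sum_lattice_imp_sums[OF sum] by (simp add: f_def)
    qed (simp add: f_def)
  qed
  have "(\<lambda>i. integral\<^sup>L M (f i)) sums (\<integral>w. (\<Sum>i. f i w) \<partial>M)"
  proof (rule sums_integral[OF f_int])
    show "AE w in M. summable (\<lambda>i. norm (f i w))" using pointwise by eventually_elim (rule conjunct2)
  qed (rule sums_summable[OF sums_norm])
  then have "integral\<^sup>L M F = (\<integral>w. (\<Sum>i. f i w) \<partial>M)"
    by (rule sums_unique2[OF sums_F])
  also have "\<dots> = (\<integral>w. indicator cubeQ (\<pi> w) * H w \<partial>M)"
  proof (rule integral_cong_AE)
    show "(\<lambda>w. \<Sum>i. f i w) \<in> borel_measurable M" using f_int by measurable
    show "AE w in M. (\<Sum>i. f i w) = indicator cubeQ (\<pi> w) * H w"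
      using pointwise by eventually_elim (simp add: sums_iff)
  qed simp
  finally show ?thesis .
qed

end

lemma lattice_action_lborel: "lattice_action (lborel :: (real^'a) measure) (\<lambda>x. x) (\<lambda>k x. x + k)"
proof
  fix k :: "real^'a"
  have "distr lborel lborel (\<lambda>x. x + k) = distr lborel borel ((+) k)"
    by (rule distr_cong) (simp_all add: add.commute)
  then show "distr lborel lborel (\<lambda>x. x + k) = lborel" by (simp add: lborel_distr_plus)
qed (simp_all add: AE_lborel_off_lattice_hyperplanes)

lemma lattice_action_pair:
  "lattice_action (M2 :: ((real^'n) \<times> (real^'n)) measure) fst (\<lambda>k w. (fst w + k, snd w + k))"
proof
  obtain N where N: "{x \<in> space lborel. \<not> (\<forall>j. (x::real^'n) $ j \<notin> \<int>)} \<subseteq> N" "N \<in> null_sets lborel"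
    using AE_lborel_off_lattice_hyperplanes unfolding eventually_ae_filter by blast
  then have null: "N \<times> UNIV \<in> null_sets (M2 :: ((real^'n) \<times> (real^'n)) measure)"
    by (intro lborel.times_in_null_sets1) auto
  have "{w \<in> space M2. \<not> (\<forall>j. fst w $ j \<notin> \<int>)} \<subseteq> N \<times> (UNIV :: (real^'n) set)"
    using N(1) by auto
  then show "AE w in (M2 :: ((real^'n) \<times> (real^'n)) measure). \<forall>j. fst w $ j \<notin> \<int>"
    using null by (rule AE_I'[rotated])
next
  fix k :: "real^'n"
  show "(\<lambda>w. (fst w + k, snd w + k)) \<in> M2 \<rightarrow>\<^sub>M M2" by measurable
next
  fix k :: "real^'n"
  have "distr lborel borel ((+) k) \<Otimes>\<^sub>M distr lborel borel ((+) k) =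
      distr M2 (borel \<Otimes>\<^sub>M borel) (\<lambda>(x, y). (k + x, k + y))"
    by (rule pair_measure_distr) (simp_all add: lborel_distr_plus lborel.sigma_finite_measure_axioms)
  then have "M2 = distr M2 (borel \<Otimes>\<^sub>M borel) (\<lambda>(x, y). (k + x, k + y))"
    by (simp only: lborel_distr_plus)
  also have "\<dots> = distr M2 M2 (\<lambda>w. (fst w + k, snd w + k))"
  proof (rule distr_cong)
    show "sets (borel \<Otimes>\<^sub>M borel) = sets (M2 :: ((real^'n) \<times> (real^'n)) measure)"
      by (rule sets_pair_measure_cong) simp_all
    show "(\<lambda>(x, y). (k + x, k + y)) w = (fst w + k, snd w + k)" for w
      by (cases w) (simp add: add.commute)
  qed simp
  finally show "distr M2 M2 (\<lambda>w. (fst w + k, snd w + k)) = M2" by simp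
qed simp_all

subsection \<open>Shift-invariant kernels\<close>

lemma nn_integral_lborel_translate:
  fixes f :: "'a::euclidean_space \<Rightarrow> ennreal"
  assumes "f \<in> borel_measurable borel"
  shows "(\<integral>\<^sup>+x. f (c + x) \<partial>lborel) = (\<integral>\<^sup>+x. f x \<partial>lborel)"
  using nn_integral_distr[of "(+) c" lborel borel f] assms by (simp add: lborel_distr_plus)

locale shift_invariant_kernel =
  fixes K :: "real^'n \<Rightarrow> real^'n \<Rightarrow> real"
  assumes measurable_K [measurable]: "(\<lambda>w. K (fst w) (snd w)) \<in> borel_measurable M2"
    and nonneg: "K x y \<ge> 0"
    and symmetric: "K y x = K x y"
    and shift: "K (x + v) (y + v) = K x y"
    and finite_moment: "(\<integral>\<^sup>+h. ennreal (norm h * K h 0) \<partial>lborel) < \<infinity>"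
begin

lemma measurable_K_partial [measurable]:
  "K x \<in> borel_measurable lborel" "(\<lambda>x. K x y) \<in> borel_measurable lborel"
proof -
  have "(\<lambda>y. (x, y)) \<in> lborel \<rightarrow>\<^sub>M (M2 :: ((real^'n) \<times> (real^'n)) measure)"
    "(\<lambda>x. (x, y)) \<in> lborel \<rightarrow>\<^sub>M (M2 :: ((real^'n) \<times> (real^'n)) measure)" by measurable
  from this[THEN measurable_compose, OF measurable_K]
  show "K x \<in> borel_measurable lborel" "(\<lambda>x. K x y) \<in> borel_measurable lborel" by simp_all
qed

lemma nn_integral_moment:
  "(\<integral>\<^sup>+y. ennreal (dist x y * K x y) \<partial>lborel) = (\<integral>\<^sup>+h. ennreal (norm h * K h 0) \<partial>lborel)"
proof -
  have [measurable]: "(\<lambda>h. K h 0) \<in> borel_measurable borel"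
    using measurable_K_partial(2)[of 0] by simp
  have "K x y = K (- x + y) 0" for y
    using shift[where x=x and y=y and v="- x"] symmetric[of 0 "y - x"] by (simp add: add.commute)
  then have "(\<integral>\<^sup>+y. ennreal (dist x y * K x y) \<partial>lborel) =
      (\<integral>\<^sup>+y. ennreal (norm (- x + y) * K (- x + y) 0) \<partial>lborel)"
    by (simp add: dist_norm norm_minus_commute)
  also have "\<dots> = (\<integral>\<^sup>+h. ennreal (norm h * K h 0) \<partial>lborel)"
    by (rule nn_integral_lborel_translate) measurable
  finally show ?thesis .
qed

lemma nn_integral_indicator_moment_lt_top:
  assumes S [measurable]: "S \<in> sets borel" and "bounded S"
  shows "(\<integral>\<^sup>+w. indicator S (fst w) * ennreal (dist (fst w) (snd w) * K (fst w) (snd w)) \<partial>M2) < \<infinity>"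
    and "(\<integral>\<^sup>+w. indicator S (snd w) * ennreal (dist (fst w) (snd w) * K (fst w) (snd w)) \<partial>M2) < \<infinity>"
proof -
  let ?I = "\<integral>\<^sup>+h. ennreal (norm h * K h 0) \<partial>lborel"
  have finite: "(\<integral>\<^sup>+x. indicator S x * ?I \<partial>lborel) < \<infinity>"
    using finite_moment emeasure_bounded_finite[OF \<open>bounded S\<close>]
    by (simp add: nn_integral_multc ennreal_mult_less_top)
  have "(\<integral>\<^sup>+w. indicator S (fst w) * ennreal (dist (fst w) (snd w) * K (fst w) (snd w)) \<partial>M2)
      = (\<integral>\<^sup>+x. \<integral>\<^sup>+y. indicator S x * ennreal (dist x y * K x y) \<partial>lborel \<partial>lborel)"
    by (subst lborel.nn_integral_fst[symmetric]) simp_all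
  also have "\<dots> = (\<integral>\<^sup>+x. indicator S x * ?I \<partial>lborel)"
    by (intro nn_integral_cong) (simp add: nn_integral_cmult nn_integral_moment)
  finally show "(\<integral>\<^sup>+w. indicator S (fst w) * ennreal (dist (fst w) (snd w) * K (fst w) (snd w)) \<partial>M2) < \<infinity>"
    using finite by simp
  have "(\<integral>\<^sup>+w. indicator S (snd w) * ennreal (dist (fst w) (snd w) * K (fst w) (snd w)) \<partial>M2)
      = (\<integral>\<^sup>+y. \<integral>\<^sup>+x. indicator S y * ennreal (dist y x * K y x) \<partial>lborel \<partial>lborel)"
    by (subst lborel_pair.nn_integral_snd[symmetric]) (simp_all add: dist_commute symmetric)
  also have "\<dots> = (\<integral>\<^sup>+y. indicator S y * ?I \<partial>lborel)"
    by (intro nn_integral_cong) (simp add: nn_integral_cmult nn_integral_moment)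
  finally show "(\<integral>\<^sup>+w. indicator S (snd w) * ennreal (dist (fst w) (snd w) * K (fst w) (snd w)) \<partial>M2) < \<infinity>"
    using finite by simp
qed

lemma integrable_lipschitz_difference:
  fixes \<phi> :: "real^'n \<Rightarrow> real"
  assumes \<phi> [measurable]: "\<phi> \<in> borel_measurable borel"
    and lip: "\<And>x y. \<bar>\<phi> x - \<phi> y\<bar> \<le> C * dist x y" and "C \<ge> 0"
    and bdd: "bounded {x. \<phi> x \<noteq> 0}"
  shows "integrable M2 (\<lambda>w. (\<phi> (fst w) - \<phi> (snd w)) * K (fst w) (snd w))"
proof (rule integrableI_bounded)
  let ?S = "{x. \<phi> x \<noteq> 0}"
  let ?G = "\<lambda>x y. ennreal (dist x y * K x y)"
  have [measurable]: "?S \<in> sets borel" by measurable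
  show "(\<lambda>w. (\<phi> (fst w) - \<phi> (snd w)) * K (fst w) (snd w)) \<in> borel_measurable M2" by measurable
  have "\<bar>(\<phi> x - \<phi> y) * K x y\<bar> \<le> C * ((indicator ?S x + indicator ?S y) * (dist x y * K x y))" for x y
  proof (cases "x \<in> ?S \<or> y \<in> ?S")
    case True
    have "\<bar>(\<phi> x - \<phi> y) * K x y\<bar> \<le> C * dist x y * K x y"
      using lip[of x y] nonneg[of x y] by (simp add: abs_mult mult_right_mono)
    also have "\<dots> \<le> C * ((indicator ?S x + indicator ?S y) * (dist x y * K x y))"
      using True \<open>C \<ge> 0\<close> nonneg[of x y] by (auto simp: indicator_def mult_left_mono)
    finally show ?thesis .
  qed (use \<open>C \<ge> 0\<close> nonneg in auto)
  moreover have "ennreal (C * ((indicator ?S x + indicator ?S y) * (dist x y * K x y)))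
      = ennreal C * (indicator ?S x * ?G x y + indicator ?S y * ?G x y)" for x y
    using \<open>C \<ge> 0\<close> nonneg[of x y]
    by (cases "x \<in> ?S"; cases "y \<in> ?S") (simp_all add: ennreal_mult ennreal_plus[symmetric] mult_2 flip: mult_2_right)
  ultimately have "ennreal (norm ((\<phi> x - \<phi> y) * K x y)) \<le> ennreal C * (indicator ?S x * ?G x y + indicator ?S y * ?G x y)" for x y
    by (metis ennreal_leI real_norm_def)
  then have "(\<integral>\<^sup>+w. norm ((\<phi> (fst w) - \<phi> (snd w)) * K (fst w) (snd w)) \<partial>M2)
      \<le> (\<integral>\<^sup>+w. ennreal C * (indicator ?S (fst w) * ?G (fst w) (snd w) + indicator ?S (snd w) * ?G (fst w) (snd w)) \<partial>M2)"
    by (intro nn_integral_mono) simp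
  also have "\<dots> = ennreal C * ((\<integral>\<^sup>+w. indicator ?S (fst w) * ?G (fst w) (snd w) \<partial>M2)
      + (\<integral>\<^sup>+w. indicator ?S (snd w) * ?G (fst w) (snd w) \<partial>M2))"
    by (simp add: nn_integral_cmult nn_integral_add)
  also have "\<dots> < \<infinity>"
    using nn_integral_indicator_moment_lt_top[of ?S] bdd by (simp add: ennreal_mult_less_top)
  finally show "(\<integral>\<^sup>+w. norm ((\<phi> (fst w) - \<phi> (snd w)) * K (fst w) (snd w)) \<partial>M2) < \<infinity>" .
qed

lemma integrable_pairing:
  fixes z :: "(real^'n) \<times> (real^'n) \<Rightarrow> real" and \<eta> :: "real^'n \<Rightarrow> real"
  assumes z [measurable]: "z \<in> borel_measurable M2" and z_bound: "\<And>w. \<bar>z w\<bar> \<le> 1"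
    and \<eta>: "smooth_fun \<eta>" and bdd: "bounded {x. \<eta> x \<noteq> 0}"
  shows "integrable M2 (\<lambda>w. 1/2 * z w * (\<eta> (fst w) - \<eta> (snd w)) * K (fst w) (snd w))"
proof -
  have [measurable]: "\<eta> \<in> borel_measurable borel" by (rule borel_measurable_smooth_fun[OF \<eta>])
  obtain C where "C \<ge> 0" "\<And>x y. \<bar>\<eta> x - \<eta> y\<bar> \<le> C * dist x y"
    using smooth_fun_lipschitz[OF \<eta> bdd] by blast
  note diff_int = integrable_lipschitz_difference[OF _ this(2,1) bdd]
  show ?thesis
  proof (rule Bochner_Integration.integrable_bound[OF diff_int])
    show "AE w in M2. norm (1/2 * z w * (\<eta> (fst w) - \<eta> (snd w)) * K (fst w) (snd w))
        \<le> norm ((\<eta> (fst w) - \<eta> (snd w)) * K (fst w) (snd w))"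
    proof (rule AE_I2)
      fix w
      let ?D = "\<bar>(\<eta> (fst w) - \<eta> (snd w)) * K (fst w) (snd w)\<bar>"
      have "\<bar>z w\<bar> * ?D \<le> 1 * ?D" by (rule mult_right_mono[OF z_bound]) simp
      moreover have "norm (1/2 * z w * (\<eta> (fst w) - \<eta> (snd w)) * K (fst w) (snd w)) = 1/2 * (\<bar>z w\<bar> * ?D)"
        by (simp add: abs_mult)
      ultimately show "norm (1/2 * z w * (\<eta> (fst w) - \<eta> (snd w)) * K (fst w) (snd w))
          \<le> norm ((\<eta> (fst w) - \<eta> (snd w)) * K (fst w) (snd w))"
        using abs_ge_zero[of "(\<eta> (fst w) - \<eta> (snd w)) * K (fst w) (snd w)"] by simp
    qed
  qed simp_all
qed

lemma integral_pairing_periodize: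
  fixes z :: "(real^'n) \<times> (real^'n) \<Rightarrow> real" and \<eta> :: "real^'n \<Rightarrow> real"
  assumes z [measurable]: "z \<in> borel_measurable M2" and z_bound: "\<And>w. \<bar>z w\<bar> \<le> 1"
    and z_shift: "\<And>k. k \<in> intvecs \<Longrightarrow> AE w in M2. z (fst w + k, snd w + k) = z w"
    and \<eta>: "smooth_fun \<eta>" and bdd: "bounded {x. \<eta> x \<noteq> 0}"
  shows "(LINT w|M2. 1/2 * z w * (\<eta> (fst w) - \<eta> (snd w)) * K (fst w) (snd w)) =
    (LINT w:(cubeQ \<times> UNIV)|M2. 1/2 * z w * (periodize \<eta> (fst w) - periodize \<eta> (snd w)) * K (fst w) (snd w))"
proof -
  have [measurable]: "periodize \<eta> \<in> borel_measurable borel"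
    by (rule borel_measurable_smooth_fun[OF smooth_fun_periodize[OF \<eta> bdd]])
  have "AE w in M2. \<forall>k\<in>intvecs. z (fst w + k, snd w + k) = z w"
    using z_shift by (simp add: AE_ball_countable countable_intvecs)
  then have "AE w in M2. fst w \<in> cubeQ \<longrightarrow>
      ((\<lambda>k. 1/2 * z (fst w + k, snd w + k) * (\<eta> (fst w + k) - \<eta> (snd w + k)) * K (fst w + k) (snd w + k))
        has_sum (1/2 * z w * (periodize \<eta> (fst w) - periodize \<eta> (snd w)) * K (fst w) (snd w))) intvecs"
  proof eventually_elim
    case (elim w)
    have "((\<lambda>k. \<eta> (fst w + k) - \<eta> (snd w + k)) has_sum (periodize \<eta> (fst w) - periodize \<eta> (snd w))) intvecs"
      using has_sum_add[OF has_sum_periodize[OF bdd] has_sum_uminusI[OF has_sum_periodize[OF bdd]]] by simp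
    then have sum: "((\<lambda>k. 1/2 * z w * (\<eta> (fst w + k) - \<eta> (snd w + k)) * K (fst w) (snd w))
        has_sum (1/2 * z w * (periodize \<eta> (fst w) - periodize \<eta> (snd w)) * K (fst w) (snd w))) intvecs"
      by (intro has_sum_cmult_left has_sum_cmult_right)
    have "((\<lambda>k. 1/2 * z (fst w + k, snd w + k) * (\<eta> (fst w + k) - \<eta> (snd w + k)) * K (fst w + k) (snd w + k))
        has_sum (1/2 * z w * (periodize \<eta> (fst w) - periodize \<eta> (snd w)) * K (fst w) (snd w))) intvecs"
      using sum by (rule has_sum_cong[THEN iffD2, rotated]) (use elim in \<open>simp add: shift\<close>)
    then show ?case ..
  qed
  with integrable_pairing[OF z z_bound \<eta> bdd]
  have "(LINT w|M2. 1/2 * z w * (\<eta> (fst w) - \<eta> (snd w)) * K (fst w) (snd w)) =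
      (\<integral>w. indicator cubeQ (fst w) * (1/2 * z w * (periodize \<eta> (fst w) - periodize \<eta> (snd w)) * K (fst w) (snd w)) \<partial>M2)"
    by (intro lattice_action.integral_unfold_cubeQ[OF lattice_action_pair]) simp_all
  then show ?thesis by (simp add: set_lebesgue_integral_def indicator_times)
qed

end

subsection \<open>The Euler-Lagrange equation on the whole space\<close>

lemma integral_forcing_periodize:
  fixes g \<eta> :: "real^'n \<Rightarrow> real"
  assumes g [measurable]: "g \<in> borel_measurable lborel" and g_bound: "AE x in lborel. \<bar>g x\<bar> \<le> B"
    and g_per: "periodic_ae g"
    and \<eta>: "smooth_fun \<eta>" and bdd: "bounded {x. \<eta> x \<noteq> 0}"
  shows "(LINT x|lborel. g x * \<eta> x) = (LINT x:cubeQ|lborel. g x * periodize \<eta> x)"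
proof -
  have [measurable]: "\<eta> \<in> borel_measurable borel" "periodize \<eta> \<in> borel_measurable borel"
    using borel_measurable_smooth_fun \<eta> smooth_fun_periodize[OF \<eta> bdd] by blast+
  have "integrable lborel \<eta>"
    by (rule integrable_continuous_bounded_support[OF smooth_fun_continuous[OF \<eta>] bdd])
  then have "integrable lborel (\<lambda>x. g x * \<eta> x)"
  proof (rule Bochner_Integration.integrable_bound[where f="\<lambda>x. B * \<eta> x", OF integrable_mult_right])
    show "AE x in lborel. norm (g x * \<eta> x) \<le> norm (B * \<eta> x)"
      using g_bound
    proof eventually_elim
      case (elim x)
      then have "\<bar>g x\<bar> \<le> \<bar>B\<bar>" by linarith
      then show ?case by (simp add: abs_mult mult_right_mono)
    qed
  qed simp
  moreover have "AE x in lborel. \<forall>k\<in>intvecs. g (x + k) = g x"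
    using g_per by (simp add: periodic_ae_def AE_ball_countable countable_intvecs)
  then have "AE x in lborel. x \<in> cubeQ \<longrightarrow> ((\<lambda>k. g (x + k) * \<eta> (x + k)) has_sum (g x * periodize \<eta> x)) intvecs"
  proof eventually_elim
    case (elim x)
    have "((\<lambda>k. g x * \<eta> (x + k)) has_sum (g x * periodize \<eta> x)) intvecs"
      by (intro has_sum_cmult_right has_sum_periodize bdd)
    then have "((\<lambda>k. g (x + k) * \<eta> (x + k)) has_sum (g x * periodize \<eta> x)) intvecs"
      by (rule has_sum_cong[THEN iffD2, rotated]) (use elim in simp)
    then show ?case ..
  qed
  ultimately have "(LINT x|lborel. g x * \<eta> x) = (\<integral>x. indicator cubeQ x * (g x * periodize \<eta> x) \<partial>lborel)"
    by (intro lattice_action.integral_unfold_cubeQ[OF lattice_action_lborel]) simp_all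
  then show ?thesis by (simp add: set_lebesgue_integral_def)
qed

theorem mainTheorem3:
  fixes K :: "real^'n \<Rightarrow> real^'n \<Rightarrow> real"
    and g :: "real^'n \<Rightarrow> real"
    and s1 s2 \<delta> \<kappa>1 \<kappa>2 \<kappa>3 :: real
    and p :: "real^'n"
    and u :: "real^'n \<Rightarrow> real"
    and z :: "(real^'n) \<times> (real^'n) \<Rightarrow> real"
  assumes dim: "CARD('n) \<ge> 2"
    (* kernel *)
    and K_meas: "(\<lambda>w. K (fst w) (snd w)) \<in> borel_measurable M2"
    and K_nonneg: "\<And>x y. K x y \<ge> 0"
    and K1_sym: "\<And>x y. K y x = K x y"
    and K1_trans: "\<And>x y w. K (x + w) (y + w) = K x y"
    and K1_rot: "\<And>x y (R :: real^'n^'n). orthogonal_matrix R \<Longrightarrow> det R = 1 \<Longrightarrow>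
                    K (R *v x) (R *v y) = K x y"
    and K2: "(\<integral>\<^sup>+ h. ennreal (norm h * K h 0) \<partial>lborel) < \<infinity>"
    and K3_par: "0 < s1" "s1 < 1/2" "1/2 < s2" "s2 < 1" "\<delta> > 0" "0 < \<kappa>1" "\<kappa>1 \<le> \<kappa>2"
    and K3_low: "\<And>x y. x \<noteq> y \<Longrightarrow>
        \<kappa>1 * indicator {0<..<\<delta>} (dist x y) * dist x y powr (- (real CARD('n) + 2 * s1)) \<le> K x y"
    and K3_up: "\<And>x y. x \<noteq> y \<Longrightarrow>
        K x y \<le> \<kappa>2 * min (dist x y powr (- (real CARD('n) + 2 * s1)))
                            (dist x y powr (- (real CARD('n) + 2 * s2)))"
    and K4: "\<kappa>3 > 0" "\<And>x y. x \<in> cubeQ \<Longrightarrow> y \<in> cubeQ \<Longrightarrow> K x y \<ge> \<kappa>3"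
    (* forcing term *)
    and g_meas: "g \<in> borel_measurable lborel"
    and g_bdd: "\<exists>B. AE x in lborel. \<bar>g x\<bar> \<le> B"
    and g_per: "periodic_ae g"
    and g_mean: "(LINT x:cubeQ|lborel. g x) = 0"
    (* minimizer *)
    and u_W: "u \<in> cellW"
    and u_Lq: "set_integrable lborel cubeQ
                 (\<lambda>x. \<bar>u x\<bar> powr (real CARD('n) / (real CARD('n) - 2 * s1)))"
    and u_min: "\<And>v. v \<in> cellW \<Longrightarrow> energy K g p u \<le> energy K g p v"
    and u_fin: "energy K g p u < \<infinity>"
    (* calibration z *)
    and z_meas: "z \<in> borel_measurable M2"
    and z_range: "\<And>w. z w \<in> {-1..1}"
    and z_a: "\<And>\<eta>. smooth_fun \<eta> \<Longrightarrow> (\<forall>k\<in>intvecs. \<forall>x. \<eta> (x + k) = \<eta> x) \<Longrightarrow>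
        (LINT w:(cubeQ \<times> UNIV)|M2. 1/2 * z w * (\<eta> (fst w) - \<eta> (snd w)) * K (fst w) (snd w))
        + (LINT x:cubeQ|lborel. g x * \<eta> x) = 0"
    and z_b: "AE w in M2. u (fst w) - u (snd w) + p \<bullet> (fst w - snd w)
                 = z w * \<bar>u (fst w) - u (snd w) + p \<bullet> (fst w - snd w)\<bar>"
    and z_c: "AE w in M2. z w = - z (snd w, fst w)"
    and z_d: "\<And>k. k \<in> intvecs \<Longrightarrow> AE w in M2. z (fst w + k, snd w + k) = z w"
  shows "\<And>\<eta>. smooth_fun \<eta> \<Longrightarrow> compact (closure {x. \<eta> x \<noteq> 0}) \<Longrightarrow>
        (LINT w|M2. 1/2 * z w * (\<eta> (fst w) - \<eta> (snd w)) * K (fst w) (snd w))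
        + (LINT x|lborel. g x * \<eta> x) = 0"
proof -
  fix \<eta> :: "real^'n \<Rightarrow> real"
  assume \<eta>: "smooth_fun \<eta>" and "compact (closure {x. \<eta> x \<noteq> 0})"
  then have bdd: "bounded {x. \<eta> x \<noteq> 0}" by simp
  interpret shift_invariant_kernel K
    by unfold_locales (fact K_meas K_nonneg K1_sym K1_trans K2)+
  have "\<bar>z w\<bar> \<le> 1" for w using z_range[of w] by auto
  then have pairing: "(LINT w|M2. 1/2 * z w * (\<eta> (fst w) - \<eta> (snd w)) * K (fst w) (snd w)) =
      (LINT w:(cubeQ \<times> UNIV)|M2. 1/2 * z w * (periodize \<eta> (fst w) - periodize \<eta> (snd w)) * K (fst w) (snd w))"
    by (rule integral_pairing_periodize[OF z_meas _ z_d \<eta> bdd])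
  obtain B where "AE x in lborel. \<bar>g x\<bar> \<le> B" using g_bdd by blast
  then have forcing: "(LINT x|lborel. g x * \<eta> x) = (LINT x:cubeQ|lborel. g x * periodize \<eta> x)"
    by (rule integral_forcing_periodize[OF g_meas _ g_per \<eta> bdd])
  have "\<forall>k\<in>intvecs. \<forall>x. periodize \<eta> (x + k) = periodize \<eta> x" by (simp add: periodize_add_lattice)
  from z_a[OF smooth_fun_periodize[OF \<eta> bdd] this]
  show "(LINT w|M2. 1/2 * z w * (\<eta> (fst w) - \<eta> (snd w)) * K (fst w) (snd w))
      + (LINT x|lborel. g x * \<eta> x) = 0"
    unfolding pairing forcing .
qed

end
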